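(* Let $\mathbf{IL}\mathsf{X}$ be a Horn logic and let $\Gamma$ be a finite set of formulas. In the construction of the systematic $\mathbf{IL}\mathsf{X}$-tableau for $\Gamma$ (stages $T_0\subseteq T_1\subseteq\cdots$ with markings $\mu(T_i)$), if a node $\sigma :: A$ is marked awake in $\mu(T_{n+1})$, then at some later stage the procedure selects (visits) the node $\sigma :: A$.
   Context: Formulas: built from a countable set $\mathsf{Prop}$ of propositional variables by $\neg$, $\to$, unary $\Box$ and binary $\rhd$. $\mathbf{IL}$ is the modal logic with axioms all instances of propositional tautologies and the schemes $\Box(A\to B)\to(\Box A\to\Box B)$, $\Box(\Box A\to A)\to\Box A$, $\Box(A\to B)\to A\rhd B$, $(A\rhd B)\wedge(B\rhd C)\to A\rhd C$, $(A\rhd C)\wedge(B\rhd C)\to A\vee B\rhd C$, $A\rhd B\to(\Diamond A\to\Diamond B)$, $\Diamond A\rhd A$ (with $\Diamond=\neg\Box\neg$), and rules modus ponens and necessitation $A/\Box A$. An $\mathbf{IL}$-frame is $\langle W,R,S\rangle$ with $W\neq\emptyset$, $R$ a transitive Noetherian binary relation (no infinite chains $x_0Rx_1Rx_2\cdots$), $S$ ternary, writing $yS_xz$ for $(x,y,z)\in S$, such that each $S_x$ is a reflexive transitive relation on $\{y: xRy\}$ and $xRyRz$ implies $yS_xz$. $\mathbf{IL}\mathsf{X}$ is $\mathbf{IL}$ plus axiom schemes $\mathsf{X}$; it is a Horn logic if there is a set $\mathcal{C}_{\mathsf X}$ of strict universal Horn sentences $\forall\cdots\forall(\varphi_1\wedge\dots\wedge\varphi_n\to\psi)$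 ($n\ge 0$, $\varphi_i,\psi$ atomic) in the language with binary $R$ and ternary $S$ such that an $\mathbf{IL}$-frame validates all theorems of $\mathbf{IL}\mathsf{X}$ iff it satisfies $\mathcal{C}_{\mathsf X}$. Labels: $0$ is a label; if $\sigma$ is a label and $n\in\mathbb N$, $\sigma Rn$ is a label; if $\sigma,\rho$ are labels with $\rho$ a strict non-empty prefix of $\sigma$, then $\sigma S_\rho n$ is a label. Extended formulas additionally allow unary operators $\Box_\rho$ for labels $\rho$. A labelled formula is $\sigma :: A$. For a set $\Lambda$ of labels, $\mathbf R^\Lambda\subseteq\Lambda^2$, $\mathbf S^\Lambda\subseteq\Lambda^3$ are the least relations such that: (1) $\sigma,\sigma Rn\in\Lambda\Rightarrow \sigma\mathbf R\,\sigma Rn$; (2) $\mathbf R$ transitive; (3) $\sigma,\rho,\sigma S_\rho n\in\Lambda\Rightarrow \sigma\mathbf S_\rho\,\sigma S_\rho n$; (4) $\sigma\mathbf R\tau\Rightarrow\tau\mathbf S_\sigma\tau$; (5) $\rho\mathbf R\sigma\mathbf R\tau\Rightarrow\sigma\mathbf S_\rho\tau$; (6) $\sigma\mathbf S_\rho\tau\mathbf S_\rho\upsilon\Rightarrow\sigma\mathbf S_\rho\upsilon$; (7) $\sigma\mathbf S_\rho\tau\Rightarrow\rho\mathbf R\sigma$ and $\rho\mathbf R\tau$; (8) $\langle\Lambda,\mathbf R^\Lambda,\mathbf S^\Lambda\rangle\models\mathcal C_{\mathsf X}$. Here $\sigma\mathbf S_\rho\tau$ means $(\rho,\sigma,\tau)\in\mathbf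 S^\Lambda$. For a branch $\mathcal B$, $\mathrm{lab}(\mathcal B)$ is the set of labels occurring in it, and relations on it are $\mathbf R^{\mathrm{lab}(\mathcal B)},\mathbf S^{\mathrm{lab}(\mathcal B)}$. A branch is closed if it contains $\sigma::A$ and $\sigma::\neg A$ for some $\sigma,A$, otherwise open. Systematic $\mathbf{IL}\mathsf X$-tableau for finite $\Gamma$: built in stages $T_0\subseteq T_1\subseteq\cdots$ of downward growing trees of labelled formulas, each node marked exactly one of awake, asleep, finished ($\mu(T_i)$ is the marked tree). Stage 0: $T_0$ consists of nodes $0::A$, $A\in\Gamma$, one below the other, all awake. Stage $n+1$: choose an awake node $\sigma::A$ of $\mu(T_n)$ closest to the root (leftmost among equally close). If $A$ is $p$ or $\neg p$ with $p\in\mathsf{Prop}$, mark it finished and stop the stage. Otherwise ("extend $\mathcal B$" = append new nodes at the bottom of $\mathcal B$; all new nodes marked awake): if $A=\neg\neg B$: extend every open branch through the node with $\sigma::B$; mark node finished. If $A=B\to C$: for every open branch through it split its end, left $\sigma::\neg B$, right $\sigma::C$; finished. If $A=\neg(B\to C)$: extend every open branch through it with $\sigma::B,\sigma::\neg C$; finished. If $A=\Box B$: for every open branch $\mathcal B$ through it and every $\tau\in\mathrm{lab}(\mathcal B)$ with $\sigma\mathbf R\tau$, extend $\mathcal B$ with $\tau::B$; mark node asleep. If $A=\neg\Box B$: for every open branch $\mathcal B$ through it, with $n$ least such that $\sigma Rn\notin\mathrm{lab}(\mathcal B)$, extend $\mathcal B$ with $\sigma Rn::\neg B$ and $\sigma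 Rn::\Box B$; mark node finished; moreover mark awake every node $\tau::\Box D$ and $\tau::D\rhd E$ on $\mathcal B$ with $\tau\mathbf R\,\sigma Rn$ and every node $\tau::\Box_\kappa D$ on $\mathcal B$ with $\tau\mathbf S_\kappa\,\sigma Rn$. If $A=\Box_\rho B$: for every branch $\mathcal B$ through it and every $\tau\in\mathrm{lab}(\mathcal B)$ with $\sigma\mathbf S_\rho\tau$, extend with $\tau::B$; asleep. If $A=\neg\Box_\rho B$: for every open branch $\mathcal B$ through it, with $n$ least such that $\sigma S_\rho n\notin\mathrm{lab}(\mathcal B)$, extend with $\sigma S_\rho n::\neg B$, $\sigma S_\rho n::\Box B$; finished; reawaken as in the $\neg\Box$ case with $\sigma S_\rho n$ in place of $\sigma Rn$. If $A=B\rhd C$: for every open branch $\mathcal B$ through it and every $\tau\in\mathrm{lab}(\mathcal B)$ with $\sigma\mathbf R\tau$, split the end, left $\tau::\neg B$, right $\tau::\neg\Box_\sigma\neg C$; asleep. If $A=\neg(B\rhd C)$: for every open branch $\mathcal B$ through it, with $n$ least such that $\sigma Rn\notin\mathrm{lab}(\mathcal B)$, extend with $\sigma Rn::B$, $\sigma Rn::\Box_\sigma\neg C$, $\sigma Rn::\Box\neg B$; finished; reawaken as in the $\neg\Box$ case. The systematic tableau is $\bigcup_i T_i$. *)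

theory Defs
  imports Main
begin

text \<open>Labels: L0 is 0; LR s n is sigma R n; LS s r n is sigma S_rho n (with rho = r).\<close>
datatype label = L0 | LR label nat | LS label label nat

text \<open>Extended formulas over Prop = nat. BoxL r A is the operator Box_rho applied to A.
  The remaining connectives are treated as abbreviations as usual.\<close>
datatype fm = Atom nat | Neg fm | Imp fm fm | Box fm | Rhd fm fm | BoxL label fm

fun plain :: "fm \<Rightarrow> bool" where
  "plain (Atom p) = True"
| "plain (Neg A) = plain A"
| "plain (Imp A B) = (plain A \<and> plain B)"
| "plain (Box A) = plain A"
| "plain (Rhd A B) = (plain A \<and> plain B)"
| "plain (BoxL r A) = False"

text \<open>Atoms with variables from nat. HR x y is R(x,y); HS x y z is S(x,y,z), i.e.
  y S_x z. A strict universal Horn sentence is a pair (premises, conclusion),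
  universally closed over all its variables.\<close>
datatype hatom = HR nat nat | HS nat nat nat
type_synonym hclause = "hatom list \<times> hatom"

text \<open>Facts about labels: FR s t is s R t; FS r s t is s S_r t, i.e. (r,s,t) in S.\<close>
datatype rfact = FR label label | FS label label label

fun inst :: "(nat \<Rightarrow> label) \<Rightarrow> hatom \<Rightarrow> rfact" where
  "inst v (HR x y) = FR (v x) (v y)"
| "inst v (HS x y z) = FS (v x) (v y) (v z)"

inductive rel :: "hclause set \<Rightarrow> label set \<Rightarrow> rfact \<Rightarrow> bool"
  for C :: "hclause set" and \<Lambda> :: "label set" where
  r1: "\<sigma> \<in> \<Lambda> \<Longrightarrow> LR \<sigma> n \<in> \<Lambda> \<Longrightarrow> rel C \<Lambda> (FR \<sigma> (LR \<sigma> n))"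
| r2: "rel C \<Lambda> (FR \<sigma> \<tau>) \<Longrightarrow> rel C \<Lambda> (FR \<tau> \<upsilon>) \<Longrightarrow> rel C \<Lambda> (FR \<sigma> \<upsilon>)"
| r3: "\<sigma> \<in> \<Lambda> \<Longrightarrow> \<rho> \<in> \<Lambda> \<Longrightarrow> LS \<sigma> \<rho> n \<in> \<Lambda> \<Longrightarrow> rel C \<Lambda> (FS \<rho> \<sigma> (LS \<sigma> \<rho> n))"
| r4: "rel C \<Lambda> (FR \<sigma> \<tau>) \<Longrightarrow> rel C \<Lambda> (FS \<sigma> \<tau> \<tau>)"
| r5: "rel C \<Lambda> (FR \<rho> \<sigma>) \<Longrightarrow> rel C \<Lambda> (FR \<sigma> \<tau>) \<Longrightarrow> rel C \<Lambda> (FS \<rho> \<sigma> \<tau>)"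
| r6: "rel C \<Lambda> (FS \<rho> \<sigma> \<tau>) \<Longrightarrow> rel C \<Lambda> (FS \<rho> \<tau> \<upsilon>) \<Longrightarrow> rel C \<Lambda> (FS \<rho> \<sigma> \<upsilon>)"
| r7a: "rel C \<Lambda> (FS \<rho> \<sigma> \<tau>) \<Longrightarrow> rel C \<Lambda> (FR \<rho> \<sigma>)"
| r7b: "rel C \<Lambda> (FS \<rho> \<sigma> \<tau>) \<Longrightarrow> rel C \<Lambda> (FR \<rho> \<tau>)"
| r8: "(ps, c) \<in> C \<Longrightarrow> (\<forall>i. v i \<in> \<Lambda>) \<Longrightarrow> (\<forall>p\<in>set ps. rel C \<Lambda> (inst v p))
        \<Longrightarrow> rel C \<Lambda> (inst v c)"

definition relR :: "hclause set \<Rightarrow> label set \<Rightarrow> label \<Rightarrow> label \<Rightarrow> bool" where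
  "relR C \<Lambda> \<sigma> \<tau> \<longleftrightarrow> rel C \<Lambda> (FR \<sigma> \<tau>)"

text \<open>relS C Lambda rho sigma tau: sigma S_rho tau.\<close>
definition relS :: "hclause set \<Rightarrow> label set \<Rightarrow> label \<Rightarrow> label \<Rightarrow> label \<Rightarrow> bool" where
  "relS C \<Lambda> \<rho> \<sigma> \<tau> \<longleftrightarrow> rel C \<Lambda> (FS \<rho> \<sigma> \<tau>)"

datatype mark = Awake | Asleep | Finished

text \<open>A node is addressed by its path from the root: False = (only or left) child,
  True = right child. A marked tree maps addresses to labelled formulas with marks.\<close>
type_synonym addr = "bool list"
type_synonym node = "label \<times> fm \<times> mark"
type_synonym tree = "addr \<Rightarrow> node option"

definition pref :: "addr \<Rightarrow> addr \<Rightarrow> bool" where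
  "pref a b \<longleftrightarrow> (\<exists>s. b = a @ s)"

definition is_leaf :: "tree \<Rightarrow> addr \<Rightarrow> bool" where
  "is_leaf T l \<longleftrightarrow> T l \<noteq> None \<and> T (l @ [False]) = None \<and> T (l @ [True]) = None"

text \<open>Branches (identified by their end node) through the node at address a.\<close>
definition branches_through :: "tree \<Rightarrow> addr \<Rightarrow> addr set" where
  "branches_through T a = {l. is_leaf T l \<and> pref a l}"

definition lab :: "tree \<Rightarrow> addr \<Rightarrow> label set" where
  "lab T l = {\<sigma>. \<exists>b A m. pref b l \<and> T b = Some (\<sigma>, A, m)}"

definition closed_br :: "tree \<Rightarrow> addr \<Rightarrow> bool" where
  "closed_br T l \<longleftrightarrow> (\<exists>b c \<sigma> A m m'. pref b l \<and> pref c l \<and>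
      T b = Some (\<sigma>, A, m) \<and> T c = Some (\<sigma>, Neg A, m'))"

definition open_branches_through :: "tree \<Rightarrow> addr \<Rightarrow> addr set" where
  "open_branches_through T a = {l \<in> branches_through T a. \<not> closed_br T l}"

fun chain_map :: "addr \<Rightarrow> (label \<times> fm) list \<Rightarrow> tree" where
  "chain_map l [] = Map.empty"
| "chain_map l ((\<sigma>, A) # xs) = (chain_map (l @ [False]) xs)(l @ [False] \<mapsto> (\<sigma>, A, Awake))"

fun split_map :: "addr \<Rightarrow> ((label \<times> fm) \<times> (label \<times> fm)) list \<Rightarrow> tree" where
  "split_map l [] = Map.empty"
| "split_map l (((\<sigma>, A), (\<tau>, B)) # xs) =
     (split_map (l @ [False]) xs ++ split_map (l @ [True]) xs)
       (l @ [False] \<mapsto> (\<sigma>, A, Awake), l @ [True] \<mapsto> (\<tau>, B, Awake))"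

definition add_below :: "tree \<Rightarrow> addr set \<Rightarrow> (addr \<Rightarrow> tree) \<Rightarrow> tree" where
  "add_below T Bs g = (\<lambda>b. if \<exists>l\<in>Bs. g l b \<noteq> None
      then g (SOME l. l \<in> Bs \<and> g l b \<noteq> None) b else T b)"

definition set_mark :: "tree \<Rightarrow> addr \<Rightarrow> mark \<Rightarrow> tree" where
  "set_mark T a m = T(a := map_option (\<lambda>(\<sigma>, A, _). (\<sigma>, A, m)) (T a))"

definition reawake_set :: "hclause set \<Rightarrow> tree \<Rightarrow> addr set \<Rightarrow> (addr \<Rightarrow> label) \<Rightarrow> addr set" where
  "reawake_set C T Bs nu = {b. \<exists>l\<in>Bs. pref b l \<and> (\<exists>\<tau> D m. T b = Some (\<tau>, D, m) \<and>
      ((((\<exists>D'. D = Box D') \<or> (\<exists>D1 D2. D = Rhd D1 D2)) \<and>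
          relR C (insert (nu l) (lab T l)) \<tau> (nu l)) \<or>
       (\<exists>\<kappa> D'. D = BoxL \<kappa> D' \<and> relS C (insert (nu l) (lab T l)) \<kappa> \<tau> (nu l))))}"

definition reawaken :: "tree \<Rightarrow> addr set \<Rightarrow> tree" where
  "reawaken T W = (\<lambda>b. if b \<in> W then map_option (\<lambda>(\<sigma>, A, _). (\<sigma>, A, Awake)) (T b) else T b)"

definition freshR :: "tree \<Rightarrow> addr \<Rightarrow> label \<Rightarrow> label" where
  "freshR T l \<sigma> = LR \<sigma> (LEAST n. LR \<sigma> n \<notin> lab T l)"

definition freshS :: "tree \<Rightarrow> addr \<Rightarrow> label \<Rightarrow> label \<Rightarrow> label" where
  "freshS T l \<sigma> \<rho> = LS \<sigma> \<rho> (LEAST n. LS \<sigma> \<rho> n \<notin> lab T l)"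

text \<open>Enumerations (in any order, without repetition) of the label sets the
  Box / Box_rho / Rhd rules range over, one for each branch in Bs.\<close>
definition enumerates :: "addr set \<Rightarrow> (addr \<Rightarrow> label list) \<Rightarrow> (addr \<Rightarrow> label set) \<Rightarrow> bool" where
  "enumerates Bs e S \<longleftrightarrow> (\<forall>l\<in>Bs. distinct (e l) \<and> set (e l) = S l)"

fun stage_rule :: "hclause set \<Rightarrow> tree \<Rightarrow> addr \<Rightarrow> label \<Rightarrow> fm \<Rightarrow> tree \<Rightarrow> bool" where
  "stage_rule C T a \<sigma> (Atom p) T' = (T' = set_mark T a Finished)"
| "stage_rule C T a \<sigma> (Neg (Atom p)) T' = (T' = set_mark T a Finished)"
| "stage_rule C T a \<sigma> (Neg (Neg B)) T' =
     (T' = set_mark (add_below T (open_branches_through T a) (\<lambda>l. chain_map l [(\<sigma>, B)])) a Finished)"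
| "stage_rule C T a \<sigma> (Imp B D) T' =
     (T' = set_mark (add_below T (open_branches_through T a)
                        (\<lambda>l. split_map l [((\<sigma>, Neg B), (\<sigma>, D))])) a Finished)"
| "stage_rule C T a \<sigma> (Neg (Imp B D)) T' =
     (T' = set_mark (add_below T (open_branches_through T a)
                        (\<lambda>l. chain_map l [(\<sigma>, B), (\<sigma>, Neg D)])) a Finished)"
| "stage_rule C T a \<sigma> (Box B) T' =
     (\<exists>e. enumerates (open_branches_through T a) e (\<lambda>l. {\<tau> \<in> lab T l. relR C (lab T l) \<sigma> \<tau>}) \<and>
        T' = set_mark (add_below T (open_branches_through T a)
                         (\<lambda>l. chain_map l (map (\<lambda>\<tau>. (\<tau>, B)) (e l)))) a Asleep)"
| "stage_rule C T a \<sigma> (Neg (Box B)) T' =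
     (let Bs = open_branches_through T a; nu = (\<lambda>l. freshR T l \<sigma>) in
      T' = reawaken (set_mark (add_below T Bs (\<lambda>l. chain_map l [(nu l, Neg B), (nu l, Box B)])) a Finished)
                    (reawake_set C T Bs nu))"
| "stage_rule C T a \<sigma> (BoxL \<rho> B) T' =
     (\<exists>e. enumerates (branches_through T a) e (\<lambda>l. {\<tau> \<in> lab T l. relS C (lab T l) \<rho> \<sigma> \<tau>}) \<and>
        T' = set_mark (add_below T (branches_through T a)
                         (\<lambda>l. chain_map l (map (\<lambda>\<tau>. (\<tau>, B)) (e l)))) a Asleep)"
| "stage_rule C T a \<sigma> (Neg (BoxL \<rho> B)) T' =
     (let Bs = open_branches_through T a; nu = (\<lambda>l. freshS T l \<sigma> \<rho>) in
      T' = reawaken (set_mark (add_below T Bs (\<lambda>l. chain_map l [(nu l, Neg B), (nu l, Box B)])) a Finished)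
                    (reawake_set C T Bs nu))"
| "stage_rule C T a \<sigma> (Rhd B D) T' =
     (\<exists>e. enumerates (open_branches_through T a) e (\<lambda>l. {\<tau> \<in> lab T l. relR C (lab T l) \<sigma> \<tau>}) \<and>
        T' = set_mark (add_below T (open_branches_through T a)
               (\<lambda>l. split_map l (map (\<lambda>\<tau>. ((\<tau>, Neg B), (\<tau>, Neg (BoxL \<sigma> (Neg D))))) (e l)))) a Asleep)"
| "stage_rule C T a \<sigma> (Neg (Rhd B D)) T' =
     (let Bs = open_branches_through T a; nu = (\<lambda>l. freshR T l \<sigma>) in
      T' = reawaken (set_mark (add_below T Bs
              (\<lambda>l. chain_map l [(nu l, B), (nu l, BoxL \<sigma> (Neg D)), (nu l, Box (Neg B))])) a Finished)
                    (reawake_set C T Bs nu))"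

text \<open>a is strictly to the left of b (same depth assumed).\<close>
definition left_of :: "addr \<Rightarrow> addr \<Rightarrow> bool" where
  "left_of a b \<longleftrightarrow> (\<exists>p x y. a = p @ [False] @ x \<and> b = p @ [True] @ y)"

definition selected :: "tree \<Rightarrow> addr \<Rightarrow> bool" where
  "selected T a \<longleftrightarrow> (\<exists>\<sigma> A. T a = Some (\<sigma>, A, Awake)) \<and>
     (\<forall>b \<sigma> A. T b = Some (\<sigma>, A, Awake) \<and> b \<noteq> a \<longrightarrow>
        length a < length b \<or> (length a = length b \<and> left_of a b))"

definition step :: "hclause set \<Rightarrow> tree \<Rightarrow> tree \<Rightarrow> bool" where
  "step C T T' \<longleftrightarrow>
     ((\<nexists>a. selected T a) \<and> T' = T) \<or>
     (\<exists>a \<sigma> A. selected T a \<and> T a = Some (\<sigma>, A, Awake) \<and> stage_rule C T a \<sigma> A T')"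

fun init_tree :: "fm list \<Rightarrow> tree" where
  "init_tree [] = Map.empty"
| "init_tree (A # As) = (chain_map [] (map (\<lambda>B. (L0, B)) As))([] \<mapsto> (L0, A, Awake))"

definition tableau_run :: "hclause set \<Rightarrow> fm list \<Rightarrow> (nat \<Rightarrow> tree) \<Rightarrow> bool" where
  "tableau_run C Gs T \<longleftrightarrow> T 0 = init_tree Gs \<and> (\<forall>i. step C (T i) (T (Suc i)))"

end

theory Submission
  imports Defs
begin

(*
  While the node at address a stays awake, every stage selects a node p of higher priority
  (closer to the root, or equally deep and further left), and only finitely many addresses have
  higher priority. On these addresses the triple (unfinished positions, empty positions, awake
  nodes) decreases lexicographically at each such stage. Nodes are never removed, and finished
  nodes never wake up, because only Box, Rhd and Box_rho nodes are reawakened and those are put to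
  sleep rather than finished. So either p gets finished, or p falls asleep while no old node wakes
  up, in which case either a new node fills a position or the number of awake nodes drops.
*)

definition priority :: "(addr \<times> addr) set" where
  "priority = lenlex {(False, True)}"

lemma priority_iff:
  "(a, b) \<in> priority \<longleftrightarrow> length a < length b \<or> length a = length b \<and> left_of a b"
  by (auto simp: priority_def lenlex_conv lex_conv left_of_def)

lemma finite_priority_below: "finite {b. (b, a) \<in> priority}"
proof (rule finite_subset)
  show "{b. (b, a) \<in> priority} \<subseteq> {b. set b \<subseteq> UNIV \<and> length b \<le> length a}"
    by (auto simp: priority_iff)
qed (rule finite_lists_length_le, simp)

definition awake :: "tree \<Rightarrow> addr \<Rightarrow> bool" where
  "awake T b \<longleftrightarrow> (\<exists>\<sigma> A. T b = Some (\<sigma>, A, Awake))"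

definition finished :: "tree \<Rightarrow> addr \<Rightarrow> bool" where
  "finished T b \<longleftrightarrow> (\<exists>\<sigma> A. T b = Some (\<sigma>, A, Finished))"

lemma selected_iff_priority:
  "selected T a \<longleftrightarrow> awake T a \<and> (\<forall>b. awake T b \<and> b \<noteq> a \<longrightarrow> (a, b) \<in> priority)"
  by (auto simp: selected_def awake_def priority_iff)

lemma selected_exists:
  assumes "awake T a"
  shows "\<exists>p. selected T p"
proof -
  have "wf priority"
    unfolding priority_def by (intro wf_lenlex) (simp add: wf_iff_acyclic_if_finite acyclic_def)
  then obtain p where p: "awake T p" and min: "\<And>b. (b, p) \<in> priority \<Longrightarrow> \<not> awake T b"
    using assms by (metis wfE_min' mem_Collect_eq empty_iff)
  have "total priority"
    unfolding priority_def by (rule total_lenlex) (auto simp: total_on_def)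
  then have "selected T p"
    using p min by (auto simp: selected_iff_priority total_on_def)
  then show ?thesis ..
qed

definition downward_closed :: "tree \<Rightarrow> bool" where
  "downward_closed T \<longleftrightarrow> (\<forall>b x. T (b @ [x]) \<noteq> None \<longrightarrow> T b \<noteq> None)"

definition grows_below :: "addr \<Rightarrow> tree \<Rightarrow> bool" where
  "grows_below l M \<longleftrightarrow>
     (\<forall>b. M b \<noteq> None \<longrightarrow> (\<exists>y s. b = l @ y # s) \<and> awake M b) \<and>
     (\<forall>b x. M (b @ [x]) \<noteq> None \<longrightarrow> b = l \<or> M b \<noteq> None)"

lemma grows_below_hang:
  assumes "grows_below (l @ [y]) M"
  shows "grows_below l (M(l @ [y] \<mapsto> (\<sigma>, A, Awake)))" (is "grows_below l ?M")
  unfolding grows_below_def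
proof (rule conjI; intro allI impI)
  fix b assume b: "?M b \<noteq> None"
  show "(\<exists>z s. b = l @ z # s) \<and> awake ?M b"
  proof (cases "b = l @ [y]")
    case False
    with b have "M b \<noteq> None" by simp
    with assms obtain z s where "b = (l @ [y]) @ z # s" "awake M b"
      unfolding grows_below_def by blast
    with False show ?thesis by (auto simp: awake_def)
  qed (auto simp: awake_def)
next
  fix b x assume h: "?M (b @ [x]) \<noteq> None"
  show "b = l \<or> ?M b \<noteq> None"
  proof (cases "b @ [x] = l @ [y]")
    case False
    with h have "M (b @ [x]) \<noteq> None" by auto
    with assms have "b = l @ [y] \<or> M b \<noteq> None" unfolding grows_below_def by blast
    then show ?thesis by auto
  qed simp
qed

lemma grows_below_chain_map: "grows_below l (chain_map l xs)"
proof (induction xs arbitrary: l)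
  case Nil
  show ?case by (simp add: grows_below_def)
next
  case (Cons x xs)
  then show ?case by (cases x) (simp only: chain_map.simps grows_below_hang)
qed

lemma grows_below_fork:
  assumes L: "grows_below (l @ [False]) L" and R: "grows_below (l @ [True]) R"
  shows "grows_below l ((L ++ R)(l @ [False] \<mapsto> (\<sigma>, A, Awake), l @ [True] \<mapsto> (\<tau>, B, Awake)))"
    (is "grows_below l ?M")
  unfolding grows_below_def
proof (rule conjI; intro allI impI)
  fix b assume "?M b \<noteq> None"
  then consider "b = l @ [False]" | "b = l @ [True]"
    | "?M b = L b" "L b \<noteq> None" | "?M b = R b" "R b \<noteq> None"
    by (auto simp: map_add_def split: option.splits if_splits)
  then show "(\<exists>y s. b = l @ y # s) \<and> awake ?M b"
  proof cases
    case 3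
    with L obtain z s where "b = (l @ [False]) @ z # s" "awake L b" unfolding grows_below_def by blast
    with 3 show ?thesis by (auto simp: awake_def)
  next
    case 4
    with R obtain z s where "b = (l @ [True]) @ z # s" "awake R b" unfolding grows_below_def by blast
    with 4 show ?thesis by (auto simp: awake_def)
  qed (auto simp: awake_def)
next
  fix b x assume "?M (b @ [x]) \<noteq> None"
  then consider "b @ [x] = l @ [False]" | "b @ [x] = l @ [True]"
    | "L (b @ [x]) \<noteq> None" | "R (b @ [x]) \<noteq> None"
    by (auto simp: map_add_def split: option.splits if_splits)
  then show "b = l \<or> ?M b \<noteq> None"
  proof cases
    case 3
    with L have "b = l @ [False] \<or> L b \<noteq> None" unfolding grows_below_def by blast
    then show ?thesis by (auto simp: map_add_def split: option.splits)
  next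
    case 4
    with R have "b = l @ [True] \<or> R b \<noteq> None" unfolding grows_below_def by blast
    then show ?thesis by (auto simp: map_add_def split: option.splits)
  qed auto
qed

lemma grows_below_split_map: "grows_below l (split_map l ps)"
  by (induction l ps rule: split_map.induct)
    (simp add: grows_below_def, simp only: split_map.simps grows_below_fork)

lemma downward_closed_None_below:
  assumes "downward_closed T" and "T (l @ [y]) = None"
  shows "T (l @ y # s) = None"
proof (induction s rule: rev_induct)
  case (snoc x s)
  then show ?case using assms(1) unfolding downward_closed_def by (metis append.assoc append_Cons)
qed (use assms(2) in simp)

definition awake_extension :: "tree \<Rightarrow> tree \<Rightarrow> bool" where
  "awake_extension T E \<longleftrightarrow>
     (\<forall>b. T b \<noteq> None \<longrightarrow> E b = T b) \<and>
     (\<forall>b. E b \<noteq> None \<and> T b = None \<longrightarrow> awake E b) \<and>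
     downward_closed E"

lemma awake_extension_refl: "downward_closed T \<Longrightarrow> awake_extension T T"
  by (auto simp: awake_extension_def)

lemma awake_extension_old_node:
  assumes "awake_extension T E" and "E b \<noteq> None" and "\<not> awake E b"
  shows "T b = E b"
  using assms unfolding awake_extension_def by metis

lemma grows_below_fresh:
  assumes "downward_closed T" and "is_leaf T l" and "grows_below l M" and "M b \<noteq> None"
  shows "T b = None"
proof -
  obtain y s where "b = l @ y # s"
    using assms(3,4) unfolding grows_below_def by blast
  moreover have "T (l @ [y]) = None"
    using assms(2) unfolding is_leaf_def by (cases y) auto
  ultimately show ?thesis using downward_closed_None_below[OF assms(1)] by simp
qed

lemma add_below_old: "\<not> (\<exists>l\<in>Bs. g l b \<noteq> None) \<Longrightarrow> add_below T Bs g b = T b"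
  by (simp add: add_below_def)

lemma add_below_new:
  "l \<in> Bs \<Longrightarrow> g l b \<noteq> None \<Longrightarrow> \<exists>l'\<in>Bs. add_below T Bs g b = g l' b \<and> g l' b \<noteq> None"
  using someI_ex[of "\<lambda>l. l \<in> Bs \<and> g l b \<noteq> None"] by (auto simp: add_below_def)

lemma add_below_awake_extension:
  assumes dc: "downward_closed T" and leaves: "Bs \<subseteq> {l. is_leaf T l}"
    and grows: "\<And>l. l \<in> Bs \<Longrightarrow> grows_below l (g l)"
  shows "awake_extension T (add_below T Bs g)" (is "awake_extension T ?E")
proof -
  have fresh: "T b = None" if l: "l \<in> Bs" and b: "g l b \<noteq> None" for l b
    using leaves l by (intro grows_below_fresh[OF dc _ grows[OF l] b]) blast
  have old: "?E b = T b" if "T b \<noteq> None" for b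
  proof -
    have "\<not> (\<exists>l\<in>Bs. g l b \<noteq> None)" using that fresh by auto
    then show ?thesis by (rule add_below_old)
  qed
  have "downward_closed ?E"
    unfolding downward_closed_def
  proof (intro allI impI)
    fix b x assume child: "?E (b @ [x]) \<noteq> None"
    show "?E b \<noteq> None"
    proof (cases "\<exists>l\<in>Bs. g l (b @ [x]) \<noteq> None")
      case True
      then obtain l where l: "l \<in> Bs" "g l (b @ [x]) \<noteq> None" by blast
      then have "b = l \<or> g l b \<noteq> None" using grows unfolding grows_below_def by blast
      then show ?thesis
      proof
        assume "b = l"
        then have "T b \<noteq> None" using leaves l(1) unfolding is_leaf_def by blast
        then show ?thesis using old by simp
      next
        assume "g l b \<noteq> None"
        then obtain l' where "?E b = g l' b" "g l' b \<noteq> None" using add_below_new[OF l(1)] by blast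
        then show ?thesis by simp
      qed
    next
      case False
      then have "?E (b @ [x]) = T (b @ [x])" by (rule add_below_old)
      with child have "T (b @ [x]) \<noteq> None" by simp
      then have "T b \<noteq> None" using dc unfolding downward_closed_def by blast
      then show ?thesis using old by simp
    qed
  qed
  moreover have "awake ?E b" if "?E b \<noteq> None" and "T b = None" for b
  proof -
    have "\<exists>l\<in>Bs. g l b \<noteq> None"
    proof (rule ccontr)
      assume "\<not> (\<exists>l\<in>Bs. g l b \<noteq> None)"
      then have "?E b = T b" by (rule add_below_old)
      with that show False by simp
    qed
    then obtain l0 where "l0 \<in> Bs" "g l0 b \<noteq> None" by blast
    then obtain l where l: "l \<in> Bs" and "?E b = g l b" "g l b \<noteq> None"
      using add_below_new by blast
    moreover have "awake (g l) b"
      using grows[OF l] \<open>g l b \<noteq> None\<close> unfolding grows_below_def by blast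
    ultimately show ?thesis by (simp add: awake_def)
  qed
  ultimately show ?thesis using old unfolding awake_extension_def by blast
qed

(* The formulas whose rule puts the node asleep; only nodes carrying them are ever reawakened. *)
fun boxed :: "fm \<Rightarrow> bool" where
  "boxed (Box _) = True"
| "boxed (Rhd _ _) = True"
| "boxed (BoxL _ _) = True"
| "boxed _ = False"

definition boxed_nodes :: "tree \<Rightarrow> addr set" where
  "boxed_nodes T = {b. \<exists>\<tau> D k. T b = Some (\<tau>, D, k) \<and> boxed D}"

(* The common shape of all rules of stage_rule: E adds the new awake nodes, the processed node p
   gets mark m, and the nodes in W are reawakened. *)
definition stage_effect :: "tree \<Rightarrow> addr \<Rightarrow> fm \<Rightarrow> tree \<Rightarrow> bool" where
  "stage_effect T p A T' \<longleftrightarrow> (\<exists>E W m. awake_extension T E \<and> T' = reawaken (set_mark E p m) W \<and>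
     W \<subseteq> boxed_nodes T \<and>
     (m = Finished \<and> \<not> boxed A \<or> m = Asleep \<and> W = {}))"

lemma reawaken_empty [simp]: "reawaken T {} = T"
  by (simp add: reawaken_def)

lemma stage_effect_finish:
  "awake_extension T E \<Longrightarrow> \<not> boxed A \<Longrightarrow> W \<subseteq> boxed_nodes T \<Longrightarrow>
    stage_effect T p A (reawaken (set_mark E p Finished) W)"
  unfolding stage_effect_def by blast

lemma stage_effect_finish_plain:
  "awake_extension T E \<Longrightarrow> \<not> boxed A \<Longrightarrow> stage_effect T p A (set_mark E p Finished)"
  using stage_effect_finish[of T E A "{}"] by simp

lemma stage_effect_sleep: "awake_extension T E \<Longrightarrow> stage_effect T p A (set_mark E p Asleep)"
  unfolding stage_effect_def by (rule exI[of _ E], rule exI[of _ "{}"]) auto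

lemma reawake_set_boxed: "reawake_set C T Bs nu \<subseteq> boxed_nodes T"
  unfolding reawake_set_def boxed_nodes_def by auto

lemma branches_through_leaves: "branches_through T a \<subseteq> {l. is_leaf T l}"
  and open_branches_through_leaves: "open_branches_through T a \<subseteq> {l. is_leaf T l}"
  by (auto simp: branches_through_def open_branches_through_def)

lemma stage_rule_effect:
  assumes "downward_closed T" and "stage_rule C T p \<sigma> A T'"
  shows "stage_effect T p A T'"
  using assms
  by (induction C T p \<sigma> A T' rule: stage_rule.induct)
    (auto simp: Let_def awake_extension_refl simp del: chain_map.simps split_map.simps
      intro!: stage_effect_finish stage_effect_finish_plain stage_effect_sleep reawake_set_boxed
        add_below_awake_extension branches_through_leaves open_branches_through_leaves
        grows_below_chain_map grows_below_split_map)

definition boxed_unfinished :: "tree \<Rightarrow> bool" where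
  "boxed_unfinished T \<longleftrightarrow> (\<forall>b \<in> boxed_nodes T. \<not> finished T b)"

lemma stage_effectE:
  assumes "stage_effect T p A T'" and "T p = Some (\<sigma>, A, Awake)"
  obtains E W m where "awake_extension T E" and "W \<subseteq> boxed_nodes T"
    and "m = Finished \<and> \<not> boxed A \<or> m = Asleep \<and> W = {}"
    and "\<And>b. T' b = (if b = p then Some (\<sigma>, A, m)
      else if b \<in> W then map_option (\<lambda>(\<tau>, D, _). (\<tau>, D, Awake)) (E b) else E b)"
proof -
  obtain E W m where E: "awake_extension T E" and T': "T' = reawaken (set_mark E p m) W"
    and W: "W \<subseteq> boxed_nodes T" and m: "m = Finished \<and> \<not> boxed A \<or> m = Asleep \<and> W = {}"
    using assms(1) unfolding stage_effect_def by blast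
  have "E p = T p" using E assms(2) by (simp add: awake_extension_def)
  moreover have "p \<notin> W" using W m assms(2) by (auto simp: boxed_nodes_def)
  ultimately show thesis
    using that[OF E W m] assms(2) by (simp add: T' reawaken_def set_mark_def)
qed

context
  fixes T T' :: tree and p :: addr and \<sigma> :: label and A :: fm
  assumes effect: "stage_effect T p A T'" and processed: "T p = Some (\<sigma>, A, Awake)"
begin

lemma stage_effect_keeps_nodes: "T b \<noteq> None \<Longrightarrow> T' b \<noteq> None"
  by (rule stage_effectE[OF effect processed]) (auto simp: awake_extension_def)

lemma stage_effect_downward_closed: "downward_closed T'"
proof (rule stage_effectE[OF effect processed])
  fix E W m
  assume "awake_extension T E"
    and T': "\<And>b. T' b = (if b = p then Some (\<sigma>, A, m)
      else if b \<in> W then map_option (\<lambda>(\<tau>, D, _). (\<tau>, D, Awake)) (E b) else E b)"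
  moreover have "T' b = None \<longleftrightarrow> E b = None" for b
    using calculation processed by (simp add: T' awake_extension_def)
  ultimately show "downward_closed T'"
    unfolding awake_extension_def downward_closed_def by metis
qed

lemma stage_effect_keeps_awake: "b \<noteq> p \<Longrightarrow> awake T b \<Longrightarrow> awake T' b"
  by (rule stage_effectE[OF effect processed]) (auto simp: awake_extension_def awake_def)

lemma stage_effect_keeps_finished:
  assumes "boxed_unfinished T" and "finished T b"
  shows "finished T' b"
proof (rule stage_effectE[OF effect processed])
  fix E W m
  assume "awake_extension T E" and "W \<subseteq> boxed_nodes T"
    and "\<And>b. T' b = (if b = p then Some (\<sigma>, A, m)
      else if b \<in> W then map_option (\<lambda>(\<tau>, D, _). (\<tau>, D, Awake)) (E b) else E b)"
  moreover have "b \<noteq> p" using assms(2) processed by (auto simp: finished_def)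
  moreover have "b \<notin> W" using assms calculation(2) by (auto simp: boxed_unfinished_def)
  ultimately show "finished T' b"
    using assms(2) by (auto simp: awake_extension_def finished_def)
qed

lemma stage_effect_boxed_unfinished:
  assumes "boxed_unfinished T"
  shows "boxed_unfinished T'"
proof (rule stage_effectE[OF effect processed])
  fix E W m
  assume E: "awake_extension T E" and m: "m = Finished \<and> \<not> boxed A \<or> m = Asleep \<and> W = {}"
    and T': "\<And>b. T' b = (if b = p then Some (\<sigma>, A, m)
      else if b \<in> W then map_option (\<lambda>(\<tau>, D, _). (\<tau>, D, Awake)) (E b) else E b)"
  have "\<not> finished T' b" if "b \<in> boxed_nodes T'" for b
  proof
    assume "finished T' b"
    with that obtain \<tau> D where T'b: "T' b = Some (\<tau>, D, Finished)" and "boxed D"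
      by (auto simp: boxed_nodes_def finished_def)
    show False
    proof (cases "b = p")
      case True
      then show False using T'b \<open>boxed D\<close> m by (simp add: T')
    next
      case False
      then have "b \<notin> W" and Eb: "E b = Some (\<tau>, D, Finished)"
        using T'b by (auto simp: T' split: if_splits)
      then have "T b = Some (\<tau>, D, Finished)"
        using awake_extension_old_node[OF E] by (simp add: awake_def)
      then show False
        using assms \<open>boxed D\<close> by (auto simp: boxed_unfinished_def boxed_nodes_def finished_def)
    qed
  qed
  then show "boxed_unfinished T'" by (simp add: boxed_unfinished_def)
qed

lemma stage_effect_processed:
  "finished T' p \<or> \<not> awake T' p \<and> (\<forall>b. awake T' b \<longrightarrow> T b = None \<or> awake T b)"
proof (rule stage_effectE[OF effect processed])
  fix E W m
  assume E: "awake_extension T E" and m: "m = Finished \<and> \<not> boxed A \<or> m = Asleep \<and> W = {}"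
    and T': "\<And>b. T' b = (if b = p then Some (\<sigma>, A, m)
      else if b \<in> W then map_option (\<lambda>(\<tau>, D, _). (\<tau>, D, Awake)) (E b) else E b)"
  from m show ?thesis
  proof
    assume "m = Asleep \<and> W = {}"
    moreover have "T b = None \<or> awake T b" if "awake E b" for b
      using E that by (auto simp: awake_extension_def awake_def)
    ultimately show ?thesis by (auto simp: T' awake_def)
  qed (simp add: T' finished_def)
qed

end

definition progress :: "addr \<Rightarrow> tree \<Rightarrow> nat \<times> nat \<times> nat" where
  "progress a T =
    (card {b. (b, a) \<in> priority \<and> \<not> finished T b},
     card {b. (b, a) \<in> priority \<and> T b = None},
     card {b. (b, a) \<in> priority \<and> awake T b})"

definition progress_order :: "((nat \<times> nat \<times> nat) \<times> (nat \<times> nat \<times> nat)) set" where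
  "progress_order = less_than <*lex*> less_than <*lex*> less_than"

lemma wf_progress_order: "wf progress_order"
  unfolding progress_order_def by (intro wf_lex_prod wf_less_than)

lemma stage_effect_progress:
  assumes effect: "stage_effect T p A T'" and processed: "T p = Some (\<sigma>, A, Awake)"
    and before: "(p, a) \<in> priority" and inv: "boxed_unfinished T"
  shows "(progress a T', progress a T) \<in> progress_order"
proof -
  define N where "N T = {b. (b, a) \<in> priority \<and> \<not> finished T b}" for T :: tree
  define M where "M T = {b. (b, a) \<in> priority \<and> T b = None}" for T :: tree
  define W where "W T = {b. (b, a) \<in> priority \<and> awake T b}" for T :: tree
  have finite: "finite (N T)" "finite (M T)" "finite (W T)" for T :: tree
    unfolding N_def M_def W_def by (auto intro: finite_subset[OF _ finite_priority_below])
  have N: "N T' \<subseteq> N T"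
    unfolding N_def using stage_effect_keeps_finished[OF effect processed inv] by blast
  then have N_card: "card (N T') \<le> card (N T)" by (intro card_mono finite)
  have M: "M T' \<subseteq> M T"
    unfolding M_def using stage_effect_keeps_nodes[OF effect processed] by blast
  have p: "p \<in> N T" "p \<in> W T"
    using before processed by (auto simp: N_def W_def finished_def awake_def)
  have "card (N T') < card (N T) \<or> card (N T') = card (N T) \<and>
     (card (M T') < card (M T) \<or> card (M T') = card (M T) \<and> card (W T') < card (W T))"
    using stage_effect_processed[OF effect processed]
  proof (elim disjE conjE)
    assume "finished T' p"
    then have "N T' \<subset> N T" using N p by (auto simp: N_def)
    then show ?thesis using finite by (simp add: psubset_card_mono)
  next
    assume asleep: "\<not> awake T' p" and no_wakeup: "\<forall>b. awake T' b \<longrightarrow> T b = None \<or> awake T b"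
    show ?thesis
    proof (cases "M T' = M T")
      case True
      have "W T' \<subset> W T"
      proof
        have "T' b = None \<longleftrightarrow> T b = None" if "(b, a) \<in> priority" for b
          using True that unfolding M_def by blast
        then show "W T' \<subseteq> W T"
          using no_wakeup by (fastforce simp: W_def awake_def)
        show "W T' \<noteq> W T" using p asleep by (auto simp: W_def)
      qed
      then show ?thesis using finite True N_card by (auto simp: psubset_card_mono)
    next
      case False
      then have "M T' \<subset> M T" using M by blast
      then show ?thesis using finite N_card by (auto simp: psubset_card_mono)
    qed
  qed
  then show ?thesis by (simp add: progress_order_def progress_def N_def M_def W_def)
qed

lemma step_progress:
  assumes step: "step C T T'" and dc: "downward_closed T" and inv: "boxed_unfinished T"
    and awake: "awake T a" and unselected: "\<not> selected T a"
  shows "awake T' a \<and> (progress a T', progress a T) \<in> progress_order"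
proof -
  obtain p \<sigma> A where sel: "selected T p" and processed: "T p = Some (\<sigma>, A, Awake)"
    and rule: "stage_rule C T p \<sigma> A T'"
    using step selected_exists[OF awake] unfolding step_def by blast
  have effect: "stage_effect T p A T'" using stage_rule_effect[OF dc rule] .
  have "a \<noteq> p" using sel unselected by blast
  then have "(p, a) \<in> priority" using sel awake by (simp add: selected_iff_priority)
  then show ?thesis
    using \<open>a \<noteq> p\<close> awake stage_effect_keeps_awake[OF effect processed]
      stage_effect_progress[OF effect processed _ inv] by blast
qed

lemma step_invariants:
  assumes "step C T T'" and "downward_closed T" and "boxed_unfinished T"
  shows "downward_closed T' \<and> boxed_unfinished T'"
proof (cases "\<exists>p. selected T p")
  case True
  then obtain p \<sigma> A where processed: "T p = Some (\<sigma>, A, Awake)" and rule: "stage_rule C T p \<sigma> A T'"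
    using assms(1) unfolding step_def by blast
  have effect: "stage_effect T p A T'" using stage_rule_effect[OF assms(2) rule] .
  show ?thesis
    using stage_effect_downward_closed[OF effect processed]
      stage_effect_boxed_unfinished[OF effect processed assms(3)] ..
next
  case False
  then show ?thesis using assms unfolding step_def by blast
qed

lemma init_tree_invariants: "downward_closed (init_tree Gs) \<and> boxed_unfinished (init_tree Gs)"
proof (cases Gs)
  case Nil
  then show ?thesis by (simp add: downward_closed_def boxed_unfinished_def boxed_nodes_def)
next
  case (Cons A As)
  let ?M = "chain_map [] (map (\<lambda>B. (L0, B)) As)"
  have M: "grows_below [] ?M" by (rule grows_below_chain_map)
  have "downward_closed (?M([] \<mapsto> (L0, A, Awake)))"
    using M unfolding grows_below_def downward_closed_def
    by (metis append_is_Nil_conv fun_upd_apply not_Cons_self2 option.discI)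
  moreover have "\<not> finished (?M([] \<mapsto> (L0, A, Awake))) b" for b
    using M unfolding grows_below_def finished_def awake_def
    by (metis fun_upd_apply mark.distinct(3) option.discI option.inject prod.inject)
  ultimately show ?thesis by (simp add: Cons boxed_unfinished_def)
qed

lemma tableau_run_invariants:
  assumes "tableau_run C Gs T"
  shows "downward_closed (T i) \<and> boxed_unfinished (T i)"
proof (induction i)
  case 0
  then show ?case using assms init_tree_invariants by (simp add: tableau_run_def)
next
  case (Suc i)
  then show ?case using assms step_invariants by (meson tableau_run_def)
qed

lemma tableau_run_awake_selected:
  assumes run: "tableau_run C Gs T" and "awake (T i) a"
  shows "\<exists>m \<ge> i. selected (T m) a"
  using assms(2)
proof (induction i rule: wf_induct_rule[OF wf_inv_image[OF wf_progress_order, of "\<lambda>i. progress a (T i)"]])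
  case (1 i)
  show ?case
  proof (cases "selected (T i) a")
    case False
    have "step C (T i) (T (Suc i))" using run by (simp add: tableau_run_def)
    then have "awake (T (Suc i)) a \<and> (progress a (T (Suc i)), progress a (T i)) \<in> progress_order"
      using step_progress tableau_run_invariants[OF run] "1.prems" False by blast
    then have "\<exists>m \<ge> Suc i. selected (T m) a" using "1.IH" by simp
    then show ?thesis using Suc_leD by blast
  qed blast
qed

theorem mainTheorem1:
  fixes C :: "hclause set" and \<Gamma> :: "fm set" and Gs :: "fm list" and T :: "nat \<Rightarrow> tree"
  assumes "finite \<Gamma>" and "\<forall>A\<in>\<Gamma>. plain A"
    and "distinct Gs" and "set Gs = \<Gamma>"
    and "tableau_run C Gs T"
    and "T (Suc n) a = Some (\<sigma>, A, Awake)"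
  shows "\<exists>m \<ge> Suc n. selected (T m) a"
  using tableau_run_awake_selected[OF assms(5)] assms(6) by (simp add: awake_def)

end
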